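(* Let $\mathfrak{n}$ be the real $7$-dimensional Lie algebra with basis $e_1,\dots,e_7$ whose nonzero brackets (up to antisymmetry) are $[e_1,e_2]=e_3$, $[e_1,e_3]=e_5$, $[e_1,e_4]=e_6$, $[e_1,e_5]=e_7$, $[e_1,e_6]=e_7$, $[e_2,e_3]=e_7$. Then $\mathfrak{n}$ is an Einstein nilradical.
   Context: A real nilpotent Lie algebra $\mathfrak{n}$ is called an Einstein nilradical if it admits an inner product such that the left-invariant Riemannian metric it defines on the simply connected nilpotent Lie group with Lie algebra $\mathfrak{n}$ is a nilsoliton, i.e. its Ricci operator satisfies $\mathrm{Ric}=c\,\mathrm{Id}+D$ for some $c\in\mathbb{R}$ and some derivation $D$ of $\mathfrak{n}$. Brackets of basis elements not listed are zero. *)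

theory Defs
  imports "HOL-Analysis.Analysis" "HOL-Library.Numeral_Type"
begin

definition lie_algebra :: "(real^'n \<Rightarrow> real^'n \<Rightarrow> real^'n) \<Rightarrow> bool" where
  "lie_algebra br \<longleftrightarrow> bilinear br \<and> (\<forall>x. br x x = 0) \<and>
     (\<forall>x y z. br x (br y z) + br y (br z x) + br z (br x y) = 0)"

fun nested_br :: "(real^'n \<Rightarrow> real^'n \<Rightarrow> real^'n) \<Rightarrow> (real^'n) list \<Rightarrow> real^'n \<Rightarrow> real^'n" where
  "nested_br br [] y = y"
| "nested_br br (x # xs) y = br x (nested_br br xs y)"

text \<open>Nilpotent: some term of the lower central series vanishes, i.e. all
  iterated brackets of length k+1 vanish for some k.\<close>
definition nilpotent_lie :: "(real^'n \<Rightarrow> real^'n \<Rightarrow> real^'n) \<Rightarrow> bool" where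
  "nilpotent_lie br \<longleftrightarrow> (\<exists>k. \<forall>xs y. length xs = k \<longrightarrow> nested_br br xs y = 0)"

definition ip :: "real^'n^'n \<Rightarrow> real^'n \<Rightarrow> real^'n \<Rightarrow> real" where
  "ip G x y = x \<bullet> (G *v y)"

definition inner_product_matrix :: "real^'n^'n \<Rightarrow> bool" where
  "inner_product_matrix G \<longleftrightarrow> transpose G = G \<and> (\<forall>x. x \<noteq> 0 \<longrightarrow> ip G x x > 0)"

text \<open>Levi-Civita connection of the left-invariant metric on left-invariant fields (Koszul formula).\<close>
definition levi_civita :: "real^'n^'n \<Rightarrow> (real^'n \<Rightarrow> real^'n \<Rightarrow> real^'n) \<Rightarrow> real^'n \<Rightarrow> real^'n \<Rightarrow> real^'n" where
  "levi_civita G br x y = (THE v. \<forall>z. 2 * ip G v z = ip G (br x y) z - ip G (br y z) x + ip G (br z x) y)"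

definition curv :: "real^'n^'n \<Rightarrow> (real^'n \<Rightarrow> real^'n \<Rightarrow> real^'n) \<Rightarrow> real^'n \<Rightarrow> real^'n \<Rightarrow> real^'n \<Rightarrow> real^'n" where
  "curv G br x y z = levi_civita G br x (levi_civita G br y z) - levi_civita G br y (levi_civita G br x z)
     - levi_civita G br (br x y) z"

definition ric :: "real^'n^'n \<Rightarrow> (real^'n \<Rightarrow> real^'n \<Rightarrow> real^'n) \<Rightarrow> real^'n \<Rightarrow> real^'n \<Rightarrow> real" where
  "ric G br x y = (\<Sum>i\<in>UNIV. curv G br (axis i 1) x y $ i)"

definition ricci_op :: "real^'n^'n \<Rightarrow> (real^'n \<Rightarrow> real^'n \<Rightarrow> real^'n) \<Rightarrow> real^'n \<Rightarrow> real^'n" where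
  "ricci_op G br x = (THE v. \<forall>y. ip G v y = ric G br x y)"

definition lie_derivation :: "(real^'n \<Rightarrow> real^'n \<Rightarrow> real^'n) \<Rightarrow> real^'n^'n \<Rightarrow> bool" where
  "lie_derivation br D \<longleftrightarrow> (\<forall>x y. D *v br x y = br (D *v x) y + br x (D *v y))"

definition nilsoliton :: "real^'n^'n \<Rightarrow> (real^'n \<Rightarrow> real^'n \<Rightarrow> real^'n) \<Rightarrow> bool" where
  "nilsoliton G br \<longleftrightarrow> (\<exists>(c::real) D. lie_derivation br D \<and> (\<forall>x. ricci_op G br x = c *\<^sub>R x + D *v x))"

definition einstein_nilradical :: "(real^'n \<Rightarrow> real^'n \<Rightarrow> real^'n) \<Rightarrow> bool" where
  "einstein_nilradical br \<longleftrightarrow> lie_algebra br \<and> nilpotent_lie br \<and>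
     (\<exists>G. inner_product_matrix G \<and> nilsoliton G br)"

text \<open>The 7-dimensional algebra; basis e_1..e_7 = axis 1 .. axis 7 of index type 7
  (note: (7::7) = 0, which is distinct from 1..6).\<close>
definition br7 :: "real^7 \<Rightarrow> real^7 \<Rightarrow> real^7" where
  "br7 x y = (let a = (\<lambda>i j. x$i * y$j - x$j * y$i) in
     (\<chi> k. if k = 3 then a 1 2
           else if k = 5 then a 1 3
           else if k = 6 then a 1 4
           else if k = 7 then a 1 5 + a 1 6 + a 2 3
           else 0))"

end

theory Submission
  imports Defs
begin

text \<open>Grade \<open>\<n>\<close> by giving \<open>e\<^sub>1, \<dots>, e\<^sub>7\<close> the degrees \<open>1, 2, 3, 3, 4, 4, 5\<close>;
  every bracket respects this grading, so the grading operator \<open>D\<close> is a derivation.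
  For a suitable inner product \<open>G\<close> the Levi-Civita connection can be solved for explicitly
  from the Koszul formula, and the resulting Ricci operator is \<open>-40 Id + 11 D\<close>.\<close>

lemma ip_diff_left: "ip G (v - w) z = ip G v z - ip G w z"
  unfolding ip_def by (simp add: inner_diff_left)

lemma inner_product_matrix_ip_eqI:
  assumes "inner_product_matrix G" and "\<And>z. ip G v z = ip G w z"
  shows "v = w"
proof (rule ccontr)
  assume "v \<noteq> w"
  then have "ip G (v - w) (v - w) > 0"
    using assms(1) by (simp add: inner_product_matrix_def)
  moreover have "ip G (v - w) (v - w) = 0"
    using assms(2) by (simp add: ip_diff_left)
  ultimately show False by simp
qed

lemma levi_civita_eqI:
  assumes "inner_product_matrix G"
    and "\<And>z. 2 * ip G v z = ip G (br x y) z - ip G (br y z) x + ip G (br z x) y"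
  shows "levi_civita G br x y = v"
  unfolding levi_civita_def
proof (rule the_equality)
  fix u assume "\<forall>z. 2 * ip G u z = ip G (br x y) z - ip G (br y z) x + ip G (br z x) y"
  then have "\<And>z. ip G u z = ip G v z" using assms(2) by (metis mult_cancel_left zero_neq_numeral)
  with assms(1) show "u = v" by (rule inner_product_matrix_ip_eqI)
qed (use assms(2) in blast)

lemma ricci_op_eqI:
  assumes "inner_product_matrix G" and "\<And>y. ric G br x y = ip G v y"
  shows "ricci_op G br x = v"
  unfolding ricci_op_def
proof (rule the_equality)
  fix u assume "\<forall>y. ip G u y = ric G br x y"
  then show "u = v" using assms by (intro inner_product_matrix_ip_eqI) auto
qed (use assms(2) in simp)

lemma exhaust_7:
  fixes x :: 7
  shows "x = 1 \<or> x = 2 \<or> x = 3 \<or> x = 4 \<or> x = 5 \<or> x = 6 \<or> x = 7"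
proof (induct x)
  case (of_int z)
  then have "z = 0 \<or> z = 1 \<or> z = 2 \<or> z = 3 \<or> z = 4 \<or> z = 5 \<or> z = 6" by fastforce
  then show ?case by auto
qed

lemma forall_7: "(\<forall>i::7. P i) \<longleftrightarrow> P 1 \<and> P 2 \<and> P 3 \<and> P 4 \<and> P 5 \<and> P 6 \<and> P 7"
  by (metis exhaust_7)

lemma UNIV_7: "UNIV = {1, 2, 3, 4, 5, 6, 7::7}"
  using exhaust_7 by auto

lemma sum_7: "sum f (UNIV::7 set) = f 1 + f 2 + f 3 + f 4 + f 5 + f 6 + f 7"
  unfolding UNIV_7 by (simp add: ac_simps)

lemma vec7_eq_iff:
  "(v::'a^7) = w \<longleftrightarrow>
     v$1 = w$1 \<and> v$2 = w$2 \<and> v$3 = w$3 \<and> v$4 = w$4 \<and> v$5 = w$5 \<and> v$6 = w$6 \<and> v$7 = w$7"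
  unfolding vec_eq_iff forall_7 ..

lemma br7_nth:
  "br7 x y $ 1 = 0"
  "br7 x y $ 2 = 0"
  "br7 x y $ 3 = x$1 * y$2 - x$2 * y$1"
  "br7 x y $ 4 = 0"
  "br7 x y $ 5 = x$1 * y$3 - x$3 * y$1"
  "br7 x y $ 6 = x$1 * y$4 - x$4 * y$1"
  "br7 x y $ 7 = (x$1 * y$5 - x$5 * y$1) + (x$1 * y$6 - x$6 * y$1) + (x$2 * y$3 - x$3 * y$2)"
  by (simp_all add: br7_def Let_def)

lemma lie_algebra_br7: "lie_algebra br7"
proof -
  have "linear (br7 x)" for x
    by (rule linearI) (simp_all add: vec7_eq_iff br7_nth algebra_simps)
  moreover have "linear (\<lambda>x. br7 x y)" for y
    by (rule linearI) (simp_all add: vec7_eq_iff br7_nth algebra_simps)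
  moreover have "br7 x (br7 y z) + br7 y (br7 z x) + br7 z (br7 x y) = 0" for x y z
    by (simp add: vec7_eq_iff br7_nth algebra_simps)
  ultimately show ?thesis
    unfolding lie_algebra_def bilinear_def by (simp add: vec7_eq_iff br7_nth)
qed

lemma nilpotent_br7: "nilpotent_lie br7"
  unfolding nilpotent_lie_def
proof (intro exI allI impI)
  fix xs :: "(real^7) list" and y :: "real^7"
  assume "length xs = 4"
  then obtain a b c d where "xs = [a, b, c, d]"
    by (auto simp: numeral_eq_Suc length_Suc_conv)
  then show "nested_br br7 xs y = 0"
    by (simp add: vec7_eq_iff br7_nth)
qed

text \<open>The basis is not nice: \<open>[e\<^sub>1,e\<^sub>5] = [e\<^sub>1,e\<^sub>6] = e\<^sub>7\<close>, so for a diagonal metric the Ricci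
  form has a nonzero \<open>(e\<^sub>5,e\<^sub>6)\<close> entry; hence the Gram matrix below is not diagonal.\<close>

definition G7 :: "real^7^7" where
  "G7 = (\<chi> i j.
     if i = 1 \<and> j = 1 then 1
     else if i = 2 \<and> j = 2 then 10
     else if (i = 3 \<and> j = 3) \<or> (i = 4 \<and> j = 4) then 180
     else if (i = 3 \<and> j = 4) \<or> (i = 4 \<and> j = 3) then 60
     else if (i = 5 \<and> j = 5) \<or> (i = 6 \<and> j = 6) then 2880
     else if (i = 5 \<and> j = 6) \<or> (i = 6 \<and> j = 5) then 1920
     else if i = 7 \<and> j = 7 then 28800
     else 0)"

lemma ip_G7:
  "ip G7 x y =
     x$1 * y$1 + 10 * x$2 * y$2
     + 180 * x$3 * y$3 + 60 * x$3 * y$4 + 60 * x$4 * y$3 + 180 * x$4 * y$4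
     + 2880 * x$5 * y$5 + 1920 * x$5 * y$6 + 1920 * x$6 * y$5 + 2880 * x$6 * y$6
     + 28800 * x$7 * y$7"
  unfolding ip_def inner_vec_def matrix_vector_mult_def G7_def sum_7
  by (simp add: algebra_simps)

lemma ip_G7_self:
  "ip G7 x x =
     (x$1)\<^sup>2 + 10 * (x$2)\<^sup>2
     + 60 * (x$3 + x$4)\<^sup>2 + 120 * (x$3)\<^sup>2 + 120 * (x$4)\<^sup>2
     + 1920 * (x$5 + x$6)\<^sup>2 + 960 * (x$5)\<^sup>2 + 960 * (x$6)\<^sup>2
     + 28800 * (x$7)\<^sup>2"
  unfolding ip_G7 by (simp add: power2_eq_square algebra_simps)

lemma inner_product_matrix_G7: "inner_product_matrix G7"
  unfolding inner_product_matrix_def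
proof (intro conjI allI impI)
  show "transpose G7 = G7"
    unfolding transpose_def G7_def vec_eq_iff by (simp add: conj_commute)
next
  fix x :: "real^7"
  assume "x \<noteq> 0"
  then have "x$1 \<noteq> 0 \<or> x$2 \<noteq> 0 \<or> x$3 \<noteq> 0 \<or> x$4 \<noteq> 0 \<or> x$5 \<noteq> 0 \<or> x$6 \<noteq> 0 \<or> x$7 \<noteq> 0"
    by (simp add: vec7_eq_iff)
  then have "(x$1)\<^sup>2 > 0 \<or> (x$2)\<^sup>2 > 0 \<or> (x$3)\<^sup>2 > 0 \<or> (x$4)\<^sup>2 > 0 \<or> (x$5)\<^sup>2 > 0 \<or> (x$6)\<^sup>2 > 0
      \<or> (x$7)\<^sup>2 > 0"
    by auto
  moreover have "(x$3 + x$4)\<^sup>2 \<ge> 0" "(x$5 + x$6)\<^sup>2 \<ge> 0"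
    by simp_all
  ultimately show "ip G7 x x > 0"
    unfolding ip_G7_self by (smt (verit) zero_le_power2)
qed

definition LC7 :: "real^7 \<Rightarrow> real^7 \<Rightarrow> real^7" where
  "LC7 x y = (\<chi> k.
     if k = 1 then
       90 * x$2 * y$3 + 30 * x$2 * y$4 + 90 * x$3 * y$2 + 1440 * x$3 * y$5 + 960 * x$3 * y$6
       + 30 * x$4 * y$2 + 960 * x$4 * y$5 + 1440 * x$4 * y$6 + 1440 * x$5 * y$3 + 960 * x$5 * y$4
       + 14400 * x$5 * y$7 + 960 * x$6 * y$3 + 1440 * x$6 * y$4 + 14400 * x$6 * y$7
       + 14400 * x$7 * y$5 + 14400 * x$7 * y$6
     else if k = 2 then
       - 9 * x$1 * y$3 - 3 * x$1 * y$4 - 9 * x$3 * y$1 + 1440 * x$3 * y$7 - 3 * x$4 * y$1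
       + 1440 * x$7 * y$3
     else if k = 3 then
       1/2 * x$1 * y$2 - 7 * x$1 * y$5 - 3 * x$1 * y$6 - 1/2 * x$2 * y$1 - 90 * x$2 * y$7
       - 7 * x$5 * y$1 - 3 * x$6 * y$1 - 90 * x$7 * y$2
     else if k = 4 then
       - 3 * x$1 * y$5 - 7 * x$1 * y$6 + 30 * x$2 * y$7 - 3 * x$5 * y$1 - 7 * x$6 * y$1
       + 30 * x$7 * y$2
     else if k = 5 then
       1/2 * x$1 * y$3 - 3 * x$1 * y$7 - 1/2 * x$3 * y$1 - 3 * x$7 * y$1
     else if k = 6 then
       1/2 * x$1 * y$4 - 3 * x$1 * y$7 - 1/2 * x$4 * y$1 - 3 * x$7 * y$1
     else
       1/2 * x$1 * y$5 + 1/2 * x$1 * y$6 + 1/2 * x$2 * y$3 - 1/2 * x$3 * y$2 - 1/2 * x$5 * y$1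
       - 1/2 * x$6 * y$1)"

lemma levi_civita_G7: "levi_civita G7 br7 x y = LC7 x y"
  using inner_product_matrix_G7
  by (rule levi_civita_eqI) (simp add: ip_G7 LC7_def br7_nth algebra_simps)

definition D7 :: "real^7^7" where
  "D7 = (\<chi> i j. if i = j then 11 * (if i = 1 then 1 else if i = 2 then 2 else if i = 3 \<or> i = 4 then 3
     else if i = 5 \<or> i = 6 then 4 else 5) else 0)"

lemma D7_mult_nth:
  "(D7 *v x) $ 1 = 11 * x$1"
  "(D7 *v x) $ 2 = 22 * x$2"
  "(D7 *v x) $ 3 = 33 * x$3"
  "(D7 *v x) $ 4 = 33 * x$4"
  "(D7 *v x) $ 5 = 44 * x$5"
  "(D7 *v x) $ 6 = 44 * x$6"
  "(D7 *v x) $ 7 = 55 * x$7"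
  unfolding matrix_vector_mult_def D7_def sum_7 by simp_all

lemma lie_derivation_D7: "lie_derivation br7 D7"
  unfolding lie_derivation_def vec7_eq_iff by (simp add: D7_mult_nth br7_nth algebra_simps)

lemma ricci_op_G7: "ricci_op G7 br7 x = (-40) *\<^sub>R x + D7 *v x"
  using inner_product_matrix_G7
proof (rule ricci_op_eqI)
  fix y
  show "ric G7 br7 x y = ip G7 ((-40) *\<^sub>R x + D7 *v x) y"
    unfolding ric_def curv_def levi_civita_G7 sum_7 ip_G7
    by (simp add: LC7_def br7_nth D7_mult_nth axis_def algebra_simps)
qed

theorem mainTheorem15:
  shows "einstein_nilradical br7"
  unfolding einstein_nilradical_def nilsoliton_def
  using lie_algebra_br7 nilpotent_br7 inner_product_matrix_G7 lie_derivation_D7 ricci_op_G7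
  by blast

end
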